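(* Let $a\in\mathbb{R}$ and $w\in\mathbb{C}\setminus\mathbb{R}$ with $(a,w)\in D_c$, and suppose $\varphi := |\operatorname{Arg}(w)| \in (0,\pi/2]$. Then $\tau_c(a,w) > 1$ if and only if $a > 0$ and $|w| < R(-a;\varphi)$.
   Context: $\operatorname{Arg}(w)\in(-\pi,\pi]$ is the principal argument; $\arccos:[-1,1]\to[0,\pi]$. $D_c := \{(a,w)\in\mathbb{R}\times(\mathbb{C}\setminus\{0\}) : \operatorname{Re}(w)<a<|w|\}$ and for $(a,w)\in D_c$, $\tau_c(a,w) := \frac{1}{\sqrt{|w|^2-a^2}}[|\operatorname{Arg}(w)| - \arccos(a/|w|)]$. For $\varphi\in(0,\pi/2]$, $C(\theta;\varphi) := \theta\cot(\theta-\varphi)$ is a strictly decreasing bijection from $[0,\varphi)$ onto $(-\infty,0]$ with inverse $C^{-1}(\cdot;\varphi)$, and $R(r;\varphi) := -C^{-1}(r;\varphi)/\sin(C^{-1}(r;\varphi)-\varphi)$ for $r\le 0$. *)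

theory Defs
  imports "HOL-Analysis.Analysis"
begin

definition Dc :: "(real \<times> complex) set" where
  "Dc = {(a, w). w \<noteq> 0 \<and> Re w < a \<and> a < cmod w}"

definition tau_c :: "real \<Rightarrow> complex \<Rightarrow> real" where
  "tau_c a w = (\<bar>Arg w\<bar> - arccos (a / cmod w)) / sqrt ((cmod w)\<^sup>2 - a\<^sup>2)"

definition Cfun :: "real \<Rightarrow> real \<Rightarrow> real" where
  "Cfun \<theta> \<phi> = \<theta> * cot (\<theta> - \<phi>)"

(* inverse of C(.;phi) : [0,phi) -> (-inf,0] *)
definition Cinv :: "real \<Rightarrow> real \<Rightarrow> real" where
  "Cinv r \<phi> = (THE \<theta>. 0 \<le> \<theta> \<and> \<theta> < \<phi> \<and> Cfun \<theta> \<phi> = r)"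

definition Rfun :: "real \<Rightarrow> real \<Rightarrow> real" where
  "Rfun r \<phi> = - Cinv r \<phi> / sin (Cinv r \<phi> - \<phi>)"

end

theory Submission
  imports Defs
begin

text \<open>Put \<open>\<phi> = |Arg w|\<close>, \<open>\<rho> = |w|\<close> and \<open>\<psi> = arccos (a/\<rho>)\<close>. On \<open>D\<^sub>c\<close> with
  \<open>\<phi> \<le> \<pi>/2\<close> we have \<open>0 \<le> Re w < a\<close>, hence \<open>0 < \<psi> < \<phi>\<close>, and \<open>\<rho> = a / cos \<psi>\<close>,
  \<open>\<tau>\<^sub>c(a,w) = (\<phi> - \<psi>) / (\<rho> sin \<psi>)\<close>. So \<open>\<tau>\<^sub>c(a,w) > 1\<close> says
  \<open>k(\<psi>) > 0\<close> for \<open>k(x) = (\<phi> - x) cos x - a sin x\<close>, a strictly decreasing function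
  on \<open>[0,\<phi>]\<close> with a unique zero \<open>x\<^sub>0\<close>. The zero is exactly where
  \<open>C(\<phi> - x\<^sub>0; \<phi>) = -a\<close>, which gives \<open>R(-a;\<phi>) = a / cos x\<^sub>0\<close>, and
  \<open>\<psi> < x\<^sub>0\<close> is equivalent to \<open>\<rho> = a / cos \<psi> < a / cos x\<^sub>0\<close>.\<close>

definition cot_balance :: "real \<Rightarrow> real \<Rightarrow> real \<Rightarrow> real" where
  "cot_balance a \<phi> x = (\<phi> - x) * cos x - a * sin x"

lemma cot_balance_strict_decreasing:
  assumes "0 < a" "\<phi> \<le> pi / 2" "0 \<le> x" "x < y" "y \<le> \<phi>"
  shows "cot_balance a \<phi> y < cot_balance a \<phi> x"
proof -
  have "cos y \<le> cos x" using assms by (intro cos_monotone_0_pi_le) auto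
  moreover have "0 \<le> cos y" using assms by (intro cos_ge_zero) auto
  ultimately have "(\<phi> - y) * cos y \<le> (\<phi> - x) * cos x"
    using assms by (intro mult_mono) auto
  moreover have "a * sin x < a * sin y"
    using assms by (intro mult_strict_left_mono sin_monotone_2pi) auto
  ultimately show ?thesis by (simp add: cot_balance_def)
qed

lemma cot_balance_pos_iff:
  assumes "0 < a" "\<phi> \<le> pi / 2" "0 \<le> x\<^sub>0" "x\<^sub>0 \<le> \<phi>" "cot_balance a \<phi> x\<^sub>0 = 0"
    and "0 \<le> x" "x \<le> \<phi>"
  shows "0 < cot_balance a \<phi> x \<longleftrightarrow> x < x\<^sub>0"
  using cot_balance_strict_decreasing[of a \<phi> x x\<^sub>0] cot_balance_strict_decreasing[of a \<phi> x\<^sub>0 x] assms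
  by (cases x x\<^sub>0 rule: linorder_cases) auto

lemma cot_balance_root:
  assumes "0 < a" "0 < \<phi>" "\<phi> \<le> pi / 2"
  obtains x\<^sub>0 where "0 < x\<^sub>0" "x\<^sub>0 < \<phi>" "cot_balance a \<phi> x\<^sub>0 = 0"
proof -
  have "0 < sin \<phi>" using assms by (intro sin_gt_zero) auto
  hence "cot_balance a \<phi> \<phi> < 0" using assms by (simp add: cot_balance_def)
  moreover have "0 < cot_balance a \<phi> 0" using assms by (simp add: cot_balance_def)
  moreover have "\<forall>x. 0 \<le> x \<and> x \<le> \<phi> \<longrightarrow> isCont (cot_balance a \<phi>) x"
    unfolding cot_balance_def by (auto intro!: continuous_intros)
  ultimately obtain x\<^sub>0 where "0 \<le> x\<^sub>0" "x\<^sub>0 \<le> \<phi>" "cot_balance a \<phi> x\<^sub>0 = 0"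
    using IVT2[of "cot_balance a \<phi>" \<phi> 0 0] assms by auto
  moreover from calculation have "x\<^sub>0 \<noteq> 0" "x\<^sub>0 \<noteq> \<phi>"
    using \<open>cot_balance a \<phi> \<phi> < 0\<close> \<open>0 < cot_balance a \<phi> 0\<close> by auto
  ultimately show ?thesis by (intro that) auto
qed

lemma Cfun_eq_neg_iff_cot_balance:
  assumes "0 \<le> \<theta>" "\<theta> < \<phi>" "\<phi> \<le> pi / 2"
  shows "Cfun \<theta> \<phi> = - a \<longleftrightarrow> cot_balance a \<phi> (\<phi> - \<theta>) = 0"
proof -
  have "0 < sin (\<phi> - \<theta>)" using assms by (intro sin_gt_zero) auto
  moreover have "Cfun \<theta> \<phi> = - (\<theta> * cos (\<phi> - \<theta>) / sin (\<phi> - \<theta>))"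
    using cos_minus[of "\<phi> - \<theta>"] sin_minus[of "\<phi> - \<theta>"] by (simp add: Cfun_def cot_def)
  ultimately show ?thesis
    by (auto simp: cot_balance_def divide_eq_eq minus_equation_iff[of "Cfun \<theta> \<phi>"])
qed

lemma Cinv_neg_eq:
  assumes "0 < a" "\<phi> \<le> pi / 2" "0 < x\<^sub>0" "x\<^sub>0 < \<phi>" "cot_balance a \<phi> x\<^sub>0 = 0"
  shows "Cinv (- a) \<phi> = \<phi> - x\<^sub>0"
  unfolding Cinv_def
proof (rule the_equality)
  show "0 \<le> \<phi> - x\<^sub>0 \<and> \<phi> - x\<^sub>0 < \<phi> \<and> Cfun (\<phi> - x\<^sub>0) \<phi> = - a"
    using assms Cfun_eq_neg_iff_cot_balance[of "\<phi> - x\<^sub>0" \<phi> a] by simp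
next
  fix \<theta> assume \<theta>: "0 \<le> \<theta> \<and> \<theta> < \<phi> \<and> Cfun \<theta> \<phi> = - a"
  hence "cot_balance a \<phi> (\<phi> - \<theta>) = 0"
    using Cfun_eq_neg_iff_cot_balance assms(2) by blast
  with \<theta> assms show "\<theta> = \<phi> - x\<^sub>0"
    using cot_balance_pos_iff[of a \<phi> x\<^sub>0 "\<phi> - \<theta>"] cot_balance_pos_iff[of a \<phi> "\<phi> - \<theta>" x\<^sub>0]
    by auto
qed

lemma Rfun_neg_eq:
  assumes "0 < a" "\<phi> \<le> pi / 2" "0 < x\<^sub>0" "x\<^sub>0 < \<phi>" "cot_balance a \<phi> x\<^sub>0 = 0"
  shows "Rfun (- a) \<phi> = a / cos x\<^sub>0"
proof -
  have "0 < sin x\<^sub>0" "0 < cos x\<^sub>0" using assms by (auto intro!: sin_gt_zero cos_gt_zero)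
  moreover have "(\<phi> - x\<^sub>0) * cos x\<^sub>0 = a * sin x\<^sub>0" using assms(5) by (simp add: cot_balance_def)
  ultimately show ?thesis
    using Cinv_neg_eq[OF assms] by (simp add: Rfun_def divide_simps, simp add: algebra_simps)
qed

lemma Dc_cos_Arg_less:
  assumes "(a, w) \<in> Dc"
  shows "cos \<bar>Arg w\<bar> < a / cmod w"
proof -
  have "w \<noteq> 0" "Re w < a" using assms by (auto simp: Dc_def)
  moreover have "cos \<bar>Arg w\<bar> = Re w / cmod w"
    using cos_Arg[OF \<open>w \<noteq> 0\<close>] by (simp add: abs_if)
  ultimately show ?thesis by (simp add: divide_strict_right_mono)
qed

lemma Dc_pos:
  assumes "(a, w) \<in> Dc" "\<bar>Arg w\<bar> \<le> pi / 2"
  shows "0 < a"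
proof -
  have "0 \<le> cos \<bar>Arg w\<bar>" using assms(2) by (intro cos_ge_zero) auto
  with Dc_cos_Arg_less[OF assms(1)] have "0 < a / cmod w" by linarith
  thus ?thesis by (simp add: zero_less_divide_iff)
qed

lemma Dc_cos_arccos:
  assumes "(a, w) \<in> Dc" "0 < a"
  shows "cos (arccos (a / cmod w)) = a / cmod w"
proof -
  have "0 < a / cmod w" "a / cmod w < 1" using assms by (auto simp: Dc_def)
  thus ?thesis by (intro cos_arccos) auto
qed

lemma Dc_arccos_bounds:
  assumes "(a, w) \<in> Dc" "\<bar>Arg w\<bar> \<le> pi / 2"
  shows "0 < arccos (a / cmod w)" "arccos (a / cmod w) < \<bar>Arg w\<bar>"
proof -
  have a: "0 < a / cmod w" "a / cmod w < 1"
    using assms Dc_pos[OF assms] by (auto simp: Dc_def)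
  have "arccos 1 < arccos (a / cmod w)" using a by (intro arccos_less_arccos) auto
  thus "0 < arccos (a / cmod w)" by simp
  have "0 \<le> cos \<bar>Arg w\<bar>" using assms(2) by (intro cos_ge_zero) auto
  hence "arccos (a / cmod w) < arccos (cos \<bar>Arg w\<bar>)"
    using Dc_cos_Arg_less[OF assms(1)] a by (intro arccos_less_arccos) auto
  thus "arccos (a / cmod w) < \<bar>Arg w\<bar>" using assms(2) arccos_cos[of "\<bar>Arg w\<bar>"] by simp
qed

lemma tau_c_gt_1_iff:
  assumes "(a, w) \<in> Dc" "\<bar>Arg w\<bar> \<le> pi / 2"
  shows "tau_c a w > 1 \<longleftrightarrow> 0 < cot_balance a \<bar>Arg w\<bar> (arccos (a / cmod w))"
proof -
  define \<rho> \<psi> where "\<rho> = cmod w" and "\<psi> = arccos (a / cmod w)"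
  have a: "0 < a" "a < \<rho>" using assms Dc_pos[OF assms] by (auto simp: Dc_def \<rho>_def)
  have cos_\<psi>: "cos \<psi> = a / \<rho>"
    using Dc_cos_arccos assms(1) a by (simp add: \<psi>_def \<rho>_def)
  have "\<bar>a / \<rho>\<bar> \<le> 1" using a by simp
  hence sin_\<psi>: "sin \<psi> = sqrt (1 - (a / \<rho>)\<^sup>2)"
    by (simp add: \<psi>_def \<rho>_def sin_arccos_abs)
  have "a\<^sup>2 < \<rho>\<^sup>2" using a by (intro power_strict_mono) auto
  hence "0 < sin \<psi>" using a by (simp add: sin_\<psi> power_divide)
  have "\<rho>\<^sup>2 - a\<^sup>2 = \<rho>\<^sup>2 * (1 - (a / \<rho>)\<^sup>2)" using a by (simp add: field_simps)
  hence "sqrt (\<rho>\<^sup>2 - a\<^sup>2) = \<rho> * sin \<psi>" using a by (simp add: sin_\<psi> real_sqrt_mult)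
  hence "tau_c a w = (\<bar>Arg w\<bar> - \<psi>) / (\<rho> * sin \<psi>)"
    by (simp add: tau_c_def \<rho>_def \<psi>_def)
  moreover have "0 < \<rho> * sin \<psi>" using a \<open>0 < sin \<psi>\<close> by simp
  ultimately have "tau_c a w > 1 \<longleftrightarrow> \<rho> * sin \<psi> < \<bar>Arg w\<bar> - \<psi>"
    by (simp add: less_divide_eq_1_pos)
  also have "\<dots> \<longleftrightarrow> a * sin \<psi> < (\<bar>Arg w\<bar> - \<psi>) * cos \<psi>"
  proof -
    have "0 < cos \<psi>" "\<rho> * cos \<psi> = a" using a by (simp_all add: cos_\<psi>)
    thus ?thesis by (metis mult.assoc mult.commute mult_less_cancel_right_pos)
  qed
  finally show ?thesis by (simp add: cot_balance_def \<psi>_def)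
qed

theorem mainTheorem13:
  fixes a :: real and w :: complex
  assumes "w \<notin> \<real>"
    and "(a, w) \<in> Dc"
    and "0 < \<bar>Arg w\<bar>" and "\<bar>Arg w\<bar> \<le> pi / 2"
  shows "tau_c a w > 1 \<longleftrightarrow> (a > 0 \<and> cmod w < Rfun (- a) \<bar>Arg w\<bar>)"
proof -
  define \<phi> \<psi> where "\<phi> = \<bar>Arg w\<bar>" and "\<psi> = arccos (a / cmod w)"
  have "0 < a" using Dc_pos assms by blast
  have \<psi>: "0 < \<psi>" "\<psi> < \<phi>" using Dc_arccos_bounds assms by (auto simp: \<phi>_def \<psi>_def)
  obtain x\<^sub>0 where x\<^sub>0: "0 < x\<^sub>0" "x\<^sub>0 < \<phi>" "cot_balance a \<phi> x\<^sub>0 = 0"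
    using cot_balance_root[of a \<phi>] \<open>0 < a\<close> assms(3,4) unfolding \<phi>_def by metis
  have "0 < cmod w" using assms(2) by (auto simp: Dc_def)
  have "cos \<psi> = a / cmod w" using Dc_cos_arccos assms(2) \<open>0 < a\<close> by (simp add: \<psi>_def)
  have "tau_c a w > 1 \<longleftrightarrow> \<psi> < x\<^sub>0"
    using tau_c_gt_1_iff cot_balance_pos_iff[of a \<phi> x\<^sub>0 \<psi>] \<open>0 < a\<close> \<psi> x\<^sub>0 assms
    by (simp add: \<phi>_def \<psi>_def)
  also have "\<dots> \<longleftrightarrow> cos x\<^sub>0 < cos \<psi>"
    using \<psi> x\<^sub>0 assms(4) by (intro cos_mono_less_eq[symmetric]) (auto simp: \<phi>_def)
  also have "\<dots> \<longleftrightarrow> cmod w * cos x\<^sub>0 < a"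
    using \<open>0 < cmod w\<close> \<open>cos \<psi> = a / cmod w\<close> by (auto simp: eq_divide_eq ac_simps)
  also have "\<dots> \<longleftrightarrow> cmod w < a / cos x\<^sub>0"
    using x\<^sub>0 assms(4) by (simp add: \<phi>_def pos_less_divide_eq cos_gt_zero)
  also have "a / cos x\<^sub>0 = Rfun (- a) \<phi>"
    using Rfun_neg_eq \<open>0 < a\<close> x\<^sub>0 assms(4) by (simp add: \<phi>_def)
  finally show ?thesis using \<open>0 < a\<close> by (simp add: \<phi>_def)
qed

end
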